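(* Let $m\ge1$, $n\ge1$ and let $P_1,\dots,P_m\in\mathcal{M}_n(\mathbb{C})$ be pairwise commuting matrices, i.e. $P_\alpha P_\beta=P_\beta P_\alpha$ for all $\alpha,\beta\in\{1,\dots,m\}$. Assume that one of the following holds: (i) each $P_\alpha$ is diagonalizable; or (ii) $n=2$ and each $P_\alpha$ is invertible. Let $k_1,\dots,k_m$ be positive integers. Then there exist matrices $Q_1,\dots,Q_m\in\mathcal{M}_n(\mathbb{C})$ such that (a) $Q_\alpha^{k_\alpha}=P_\alpha$ for all $\alpha\in\{1,\dots,m\}$, and (b) $Q_\alpha Q_\beta=Q_\beta Q_\alpha$ for all $\alpha,\beta\in\{1,\dots,m\}$. *)

theory Defs
  imports Jordan_Normal_Form.Matrix
begin

definition diagonalizable_mat :: "'a :: semiring_1 mat \<Rightarrow> bool" where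
  "diagonalizable_mat A \<longleftrightarrow> (\<exists>D. diagonal_mat D \<and> similar_mat A D)"

end

theory Submission
  imports Defs "HOL-Computational_Algebra.Fundamental_Theorem_Algebra"
begin

text \<open>
  Choose each root \<open>Q\<^sub>\<alpha>\<close> in the bicommutant of \<open>P\<^sub>\<alpha>\<close>, i.e. commuting with every matrix that
  commutes with \<open>P\<^sub>\<alpha>\<close>. Such roots commute automatically: \<open>P\<^sub>\<beta>\<close> commutes with \<open>P\<^sub>\<alpha>\<close>, hence
  with \<open>Q\<^sub>\<alpha>\<close>, so \<open>Q\<^sub>\<alpha>\<close> commutes with \<open>P\<^sub>\<beta>\<close> and therefore with \<open>Q\<^sub>\<beta>\<close>.

  For \<open>P = S D S\<^sup>-\<^sup>1\<close> with \<open>D\<close> diagonal, take \<open>Q = S E S\<^sup>-\<^sup>1\<close> where \<open>E\<close> applies one fixed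
  \<open>k\<close>-th root function to the diagonal entries; equal eigenvalues get equal roots, which is what
  puts \<open>E\<close> in the bicommutant of \<open>D\<close>. For an invertible \<open>2\<times>2\<close> matrix the root is sought among
  the matrices \<open>x\<cdot>1 + y\<cdot>P\<close>, which lie in the bicommutant of \<open>P\<close> and, by Cayley-Hamilton, form
  an algebra isomorphic to \<open>\<complex>\<times>\<complex>\<close> (distinct eigenvalues) or to \<open>\<complex>[\<epsilon>]/(\<epsilon>\<^sup>2)\<close> (a repeated
  eigenvalue, nonzero by invertibility); in both algebras every unit has \<open>k\<close>-th roots.
\<close>

definition in_bicommutant :: "nat \<Rightarrow> 'a :: semiring_1 mat \<Rightarrow> 'a mat \<Rightarrow> bool" where
  "in_bicommutant n P Q \<longleftrightarrow> (\<forall>X \<in> carrier_mat n n. X * P = P * X \<longrightarrow> X * Q = Q * X)"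

lemma in_bicommutant_commute:
  assumes "P' \<in> carrier_mat n n" and "P * P' = P' * P" and "Q \<in> carrier_mat n n"
    and "in_bicommutant n P Q" and "in_bicommutant n P' Q'"
  shows "Q * Q' = Q' * Q"
proof -
  have "P' * Q = Q * P'" using assms(1,2,4) unfolding in_bicommutant_def by metis
  then show ?thesis using assms(3,5) unfolding in_bicommutant_def by metis
qed

lemma pow_mat_diag: "mat_diag n f ^\<^sub>m k = mat_diag n (\<lambda>i. f i ^ k)"
proof (induction k)
  case 0
  have "dim_row (mat_diag n f) = n" by (simp add: mat_diag_def)
  then show ?case by simp
next
  case (Suc k)
  then show ?case by (simp del: power_Suc add: power_Suc2)
qed

lemma diagonal_mat_eq_mat_diag:
  assumes "D \<in> carrier_mat n n" and "diagonal_mat D"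
  shows "D = mat_diag n (\<lambda>i. D $$ (i, i))"
  using assms by (auto simp: mat_diag_def diagonal_mat_def)

lemma in_bicommutant_mat_diag_comp:
  fixes d :: "nat \<Rightarrow> 'a :: idom"
  shows "in_bicommutant n (mat_diag n d) (mat_diag n (g \<circ> d))"
  unfolding in_bicommutant_def
proof (intro ballI impI)
  fix X assume X: "X \<in> carrier_mat n n" and XD: "X * mat_diag n d = mat_diag n d * X"
  show "X * mat_diag n (g \<circ> d) = mat_diag n (g \<circ> d) * X"
  proof (rule eq_matI)
    fix i j assume "i < dim_row (mat_diag n (g \<circ> d) * X)" "j < dim_col (mat_diag n (g \<circ> d) * X)"
    then have ij: "i < n" "j < n" using X by (auto simp: mat_diag_def)
    have "X $$ (i, j) * d j = d i * X $$ (i, j)"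
      using arg_cong[OF XD, of "\<lambda>M. M $$ (i, j)"] ij X
      by (simp add: mat_diag_mult_left mat_diag_mult_right)
    then have "X $$ (i, j) = 0 \<or> d i = d j" by (metis mult.commute mult_cancel_left)
    then show "(X * mat_diag n (g \<circ> d)) $$ (i, j) = (mat_diag n (g \<circ> d) * X) $$ (i, j)"
      using ij X by (auto simp: mat_diag_mult_left mat_diag_mult_right)
  qed (use X in \<open>auto simp: mat_diag_def\<close>)
qed

lemma inverse_mult_cancel_mat:
  fixes S T :: "'a :: semiring_1 mat"
  assumes "S * T = 1\<^sub>m n" and "S \<in> carrier_mat n n" and "T \<in> carrier_mat n n"
    and "Z \<in> carrier_mat n nc"
  shows "S * (T * Z) = Z"
  using assoc_mult_mat[OF assms(2-4)] left_mult_one_mat[OF assms(4)] assms(1) by metis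

lemma conjugate_mult_mat:
  fixes S T :: "'a :: semiring_1 mat"
  assumes "S * T = 1\<^sub>m n" and "S \<in> carrier_mat n n" and "T \<in> carrier_mat n n"
    and "A \<in> carrier_mat n n" and "B \<in> carrier_mat n n"
  shows "T * A * S * (T * B * S) = T * (A * B) * S"
proof -
  have "S * (T * (B * S)) = B * S"
    using assms by (intro inverse_mult_cancel_mat[of S T n "B * S" n]) auto
  then show ?thesis using assms by (simp add: assoc_mult_mat[of _ n n _ n _ n])
qed

lemma conjugate_cancel_mat:
  fixes S T :: "'a :: semiring_1 mat"
  assumes "T * S = 1\<^sub>m n" and "S \<in> carrier_mat n n" and "T \<in> carrier_mat n n"
    and "A \<in> carrier_mat n n"
  shows "T * (S * A * T) * S = A"
  using assms inverse_mult_cancel_mat[OF assms(1,3,2,4)] right_mult_one_mat[OF assms(4)]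
  by (simp add: assoc_mult_mat[of _ n n _ n _ n])

lemma in_bicommutant_similar:
  assumes wit: "similar_mat_wit P D S T" and P: "P \<in> carrier_mat n n"
    and E: "E \<in> carrier_mat n n" and DE: "in_bicommutant n D E"
  shows "in_bicommutant n P (S * E * T)"
  unfolding in_bicommutant_def
proof (intro ballI impI)
  from wit P have D: "D \<in> carrier_mat n n" and S: "S \<in> carrier_mat n n" and T: "T \<in> carrier_mat n n"
    and ST: "S * T = 1\<^sub>m n" and TS: "T * S = 1\<^sub>m n" and PD: "P = S * D * T"
    using similar_mat_witD2[OF P wit] by auto
  have DP: "T * P * S = D" unfolding PD by (rule conjugate_cancel_mat[OF TS S T D])
  fix X assume X: "X \<in> carrier_mat n n" and XP: "X * P = P * X"
  define Y where "Y = T * X * S"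
  have Y: "Y \<in> carrier_mat n n" using T X S by (simp add: Y_def)
  have XY: "S * Y * T = X" unfolding Y_def by (rule conjugate_cancel_mat[OF ST T S X])
  have "Y * D = T * X * S * (T * P * S)" by (simp only: Y_def DP)
  also have "\<dots> = T * (P * X) * S" by (simp only: conjugate_mult_mat[OF ST S T X P] XP)
  also have "\<dots> = D * Y" by (simp only: conjugate_mult_mat[OF ST S T P X, symmetric] Y_def DP)
  finally have YE: "Y * E = E * Y" using DE Y unfolding in_bicommutant_def by blast
  have "X * (S * E * T) = S * (Y * E) * T"
    by (simp only: conjugate_mult_mat[OF TS T S Y E, symmetric] XY)
  also have "\<dots> = S * E * T * X"
    by (simp only: YE conjugate_mult_mat[OF TS T S E Y, symmetric] XY)
  finally show "X * (S * E * T) = S * E * T * X" .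
qed

lemma diagonalizable_mat_root_in_bicommutant:
  fixes P :: "'a :: alg_closed_field mat"
  assumes P: "P \<in> carrier_mat n n" and "diagonalizable_mat P" and k: "k > 0"
  shows "\<exists>Q \<in> carrier_mat n n. Q ^\<^sub>m k = P \<and> in_bicommutant n P Q"
proof -
  obtain D S T where wit: "similar_mat_wit P D S T" and "diagonal_mat D"
    using assms(2) unfolding diagonalizable_mat_def similar_mat_def by blast
  have D: "D \<in> carrier_mat n n" and S: "S \<in> carrier_mat n n" and T: "T \<in> carrier_mat n n"
    and ST: "S * T = 1\<^sub>m n" and TS: "T * S = 1\<^sub>m n" and PD: "P = S * D * T"
    using similar_mat_witD2[OF P wit] by auto
  define d where "d i = D $$ (i, i)" for i
  have D_diag: "D = mat_diag n d"
    unfolding d_def by (rule diagonal_mat_eq_mat_diag[OF D \<open>diagonal_mat D\<close>])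
  obtain r :: "'a \<Rightarrow> 'a" where r: "\<And>z. r z ^ k = z"
    using nth_root_exists[OF k] by metis
  define E where "E = mat_diag n (r \<circ> d)"
  have E: "E \<in> carrier_mat n n" by (simp add: E_def)
  have "similar_mat_wit (S * E * T) E S T"
    using ST TS S E T by (intro similar_mat_witI) auto
  then have "(S * E * T) ^\<^sub>m k = S * E ^\<^sub>m k * T" by (rule similar_mat_wit_pow_id)
  also have "E ^\<^sub>m k = D" by (simp add: E_def D_diag pow_mat_diag r)
  finally have "(S * E * T) ^\<^sub>m k = P" by (simp add: PD)
  moreover have "in_bicommutant n D E"
    unfolding D_diag E_def by (rule in_bicommutant_mat_diag_comp)
  then have "in_bicommutant n P (S * E * T)" by (rule in_bicommutant_similar[OF wit P E])
  ultimately show ?thesis using S E T by auto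
qed

definition pencil :: "'a :: comm_ring_1 mat \<Rightarrow> 'a \<Rightarrow> 'a \<Rightarrow> 'a mat" where
  "pencil P x y = x \<cdot>\<^sub>m 1\<^sub>m (dim_row P) + y \<cdot>\<^sub>m P"

lemma pencil_carrier: "P \<in> carrier_mat n n \<Longrightarrow> pencil P x y \<in> carrier_mat n n"
  by (simp add: pencil_def)

lemma index_pencil:
  "P \<in> carrier_mat n n \<Longrightarrow> i < n \<Longrightarrow> j < n \<Longrightarrow>
    pencil P x y $$ (i, j) = (if i = j then x else 0) + y * P $$ (i, j)"
  by (simp add: pencil_def)

lemma dim_row_pencil [simp]: "dim_row (pencil P x y) = dim_row P"
  by (simp add: pencil_def)

lemma pencil_0_1: "P \<in> carrier_mat n n \<Longrightarrow> pencil P 0 1 = P"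
  by (rule eq_matI) (auto simp: pencil_def)

lemma pencil_1_0: "P \<in> carrier_mat n n \<Longrightarrow> pencil P 1 0 = 1\<^sub>m n"
  by (rule eq_matI) (auto simp: pencil_def)

lemma pencil_0_0: "P \<in> carrier_mat n n \<Longrightarrow> pencil P 0 0 = 0\<^sub>m n n"
  by (rule eq_matI) (auto simp: pencil_def)

lemma in_bicommutant_pencil:
  assumes P: "P \<in> carrier_mat n n"
  shows "in_bicommutant n P (pencil P x y)"
  unfolding in_bicommutant_def
proof (intro ballI impI)
  fix X assume X: "X \<in> carrier_mat n n" and XP: "X * P = P * X"
  have I: "1\<^sub>m n \<in> carrier_mat n n" by simp
  have "X * pencil P x y = X * (x \<cdot>\<^sub>m 1\<^sub>m n) + X * (y \<cdot>\<^sub>m P)"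
    using P by (simp add: pencil_def mult_add_distrib_mat[OF X smult_carrier_mat[OF I] smult_carrier_mat[OF P]])
  also have "\<dots> = x \<cdot>\<^sub>m X + y \<cdot>\<^sub>m (X * P)"
    by (simp add: mult_smult_distrib[OF X I] mult_smult_distrib[OF X P] right_mult_one_mat[OF X])
  also have "\<dots> = (x \<cdot>\<^sub>m 1\<^sub>m n) * X + (y \<cdot>\<^sub>m P) * X"
    by (simp add: mult_smult_assoc_mat[OF I X] mult_smult_assoc_mat[OF P X] left_mult_one_mat[OF X] XP)
  also have "\<dots> = pencil P x y * X"
    using P by (simp add: pencil_def add_mult_distrib_mat[OF smult_carrier_mat[OF I] smult_carrier_mat[OF P] X])
  finally show "X * pencil P x y = pencil P x y * X" .
qed

lemma index_mult_mat_2: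
  assumes "A \<in> carrier_mat 2 2" and "B \<in> carrier_mat 2 2" and "i < 2" and "j < 2"
  shows "(A * B) $$ (i, j) = A $$ (i, 0) * B $$ (0, j) + A $$ (i, 1) * B $$ (1, j)"
  using assms by (simp add: scalar_prod_def numeral_2_eq_2)

definition char_roots_2 :: "'a :: comm_ring_1 mat \<Rightarrow> 'a \<Rightarrow> 'a \<Rightarrow> bool" where
  "char_roots_2 P l1 l2 \<longleftrightarrow> l1 + l2 = P $$ (0, 0) + P $$ (1, 1)
    \<and> l1 * l2 = P $$ (0, 0) * P $$ (1, 1) - P $$ (0, 1) * P $$ (1, 0)"

lemma pencil_mult_2:
  assumes P: "P \<in> carrier_mat 2 2" and "char_roots_2 P l1 l2"
  shows "pencil P x y * pencil P u v
    = pencil P (x * u - y * v * (l1 * l2)) (x * v + y * u + y * v * (l1 + l2))"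
proof -
  from assms(2) have tr: "l1 + l2 = P $$ (0, 0) + P $$ (1, 1)"
    and det: "l1 * l2 = P $$ (0, 0) * P $$ (1, 1) - P $$ (0, 1) * P $$ (1, 0)"
    unfolding char_roots_2_def by auto
  show ?thesis unfolding tr det
  proof (rule eq_matI, goal_cases)
    case (1 i j)
    then have "i = 0 \<or> i = 1" "j = 0 \<or> j = 1" using P by (auto simp: pencil_def)
    then show ?case using P by (auto simp: index_mult_mat_2 pencil_carrier index_pencil algebra_simps)
  qed (use P in \<open>auto simp: pencil_def\<close>)
qed

lemma root_in_bicommutant_2_distinct:
  fixes P :: "'a :: field mat"
  assumes P: "P \<in> carrier_mat 2 2" and roots: "char_roots_2 P l1 l2" and "l1 \<noteq> l2"
    and "r1 ^ k = l1" and "r2 ^ k = l2"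
  shows "\<exists>Q \<in> carrier_mat 2 2. Q ^\<^sub>m k = P \<and> in_bicommutant 2 P Q"
proof -
  define c where "c = inverse (l1 - l2)"
  have c: "c * (l1 - l2) = 1" using \<open>l1 \<noteq> l2\<close> by (simp add: c_def)
  \<comment> \<open>Lagrange interpolation: \<open>M u v\<close> is the polynomial in \<open>P\<close> with values \<open>u\<close> at \<open>l1\<close> and \<open>v\<close> at \<open>l2\<close>.\<close>
  define M where "M u v = pencil P (c * (v * l1 - u * l2)) (c * (u - v))" for u v
  have M_mult: "M u v * M u' v' = M (u * u') (v * v')" for u v u' v'
    unfolding M_def pencil_mult_2[OF P roots]
  proof (rule arg_cong2[where f = "pencil P"], goal_cases)
    case 1
    have "c * (v * l1 - u * l2) * (c * (v' * l1 - u' * l2)) - c * (u - v) * (c * (u' - v')) * (l1 * l2)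
        = c * (c * (l1 - l2)) * (v * v' * l1 - u * u' * l2)"
      by (simp add: algebra_simps)
    then show ?case using c by simp
  next
    case 2
    have "c * (v * l1 - u * l2) * (c * (u' - v')) + c * (u - v) * (c * (v' * l1 - u' * l2))
          + c * (u - v) * (c * (u' - v')) * (l1 + l2)
        = c * (c * (l1 - l2)) * (u * u' - v * v')"
      by (simp add: algebra_simps)
    then show ?case using c by simp
  qed
  have M_pow: "M u v ^\<^sub>m j = M (u ^ j) (v ^ j)" for u v j
  proof (induction j)
    case 0
    have "M 1 1 = 1\<^sub>m 2" using c by (simp add: M_def pencil_1_0[OF P])
    then show ?case using P by (simp add: M_def)
  next
    case (Suc j)
    then show ?case by (simp add: M_mult power_Suc2 del: power_Suc)
  qed
  have "M r1 r2 ^\<^sub>m k = M l1 l2" by (simp add: M_pow assms(4,5))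
  also have "\<dots> = P" using c by (simp add: M_def mult.commute pencil_0_1[OF P])
  finally have "M r1 r2 ^\<^sub>m k = P" .
  moreover have "M r1 r2 \<in> carrier_mat 2 2" "in_bicommutant 2 P (M r1 r2)"
    unfolding M_def by (simp_all add: pencil_carrier[OF P] in_bicommutant_pencil[OF P])
  ultimately show ?thesis by blast
qed

lemma root_in_bicommutant_2_repeated:
  fixes P :: "'a :: field_char_0 mat"
  assumes P: "P \<in> carrier_mat 2 2" and roots: "char_roots_2 P l l" and "l \<noteq> 0"
    and "r ^ k = l" and "k > 0"
  shows "\<exists>Q \<in> carrier_mat 2 2. Q ^\<^sub>m k = P \<and> in_bicommutant 2 P Q"
proof -
  \<comment> \<open>\<open>N u w = u \<cdot> (1 + w \<cdot> (P - l))\<close>, and \<open>(P - l)\<^sup>2 = 0\<close>.\<close>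
  define N where "N u w = pencil P (u - u * w * l) (u * w)" for u w
  have N_mult: "N u w * N u' w' = N (u * u') (w + w')" for u w u' w'
    unfolding N_def pencil_mult_2[OF P roots]
    by (rule arg_cong2[where f = "pencil P"]) (simp_all add: algebra_simps)
  have N_pow: "N u w ^\<^sub>m j = N (u ^ j) (of_nat j * w)" for u w j
  proof (induction j)
    case 0
    then show ?case using P by (simp add: N_def pencil_1_0[OF P])
  next
    case (Suc j)
    then show ?case by (simp add: N_mult algebra_simps power_Suc2 del: power_Suc)
  qed
  define Q where "Q = N r (1 / (of_nat k * l))"
  have "Q ^\<^sub>m k = N l (1 / l)"
    using assms(4,5) by (simp add: Q_def N_pow)
  also have "\<dots> = P" using \<open>l \<noteq> 0\<close> by (simp add: N_def pencil_0_1[OF P])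
  finally have "Q ^\<^sub>m k = P" .
  moreover have "Q \<in> carrier_mat 2 2" "in_bicommutant 2 P Q"
    unfolding Q_def N_def by (simp_all add: pencil_carrier[OF P] in_bicommutant_pencil[OF P])
  ultimately show ?thesis by blast
qed

lemma invertible_mat_mult_self_nonzero:
  fixes P :: "'a :: semiring_1 mat"
  assumes "invertible_mat P" and P: "P \<in> carrier_mat n n" and "n > 0"
  shows "P * P \<noteq> 0\<^sub>m n n"
proof
  assume PP: "P * P = 0\<^sub>m n n"
  obtain B where "inverts_mat P B" and "inverts_mat B P"
    using assms(1) unfolding invertible_mat_def by blast
  then have PB: "P * B = 1\<^sub>m n" and B: "B \<in> carrier_mat n n"
    using P unfolding inverts_mat_def carrier_mat_def by (auto dest: arg_cong[of _ _ dim_col])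
  have "P = P * (P * B)" using P by (simp add: PB)
  also have "\<dots> = 0\<^sub>m n n" using P B by (simp flip: assoc_mult_mat add: PP)
  finally have "1\<^sub>m n = (0\<^sub>m n n :: 'a mat)" using B by (simp flip: PB)
  then show False using \<open>n > 0\<close> by (metis index_one_mat(1) index_zero_mat(1) one_neq_zero)
qed

lemma invertible_mat_2_root_in_bicommutant:
  fixes P :: "complex mat"
  assumes P: "P \<in> carrier_mat 2 2" and "invertible_mat P" and k: "k > 0"
  shows "\<exists>Q \<in> carrier_mat 2 2. Q ^\<^sub>m k = P \<and> in_bicommutant 2 P Q"
proof -
  define tr where "tr = P $$ (0, 0) + P $$ (1, 1)"
  define dt where "dt = P $$ (0, 0) * P $$ (1, 1) - P $$ (0, 1) * P $$ (1, 0)"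
  define s where "s = csqrt (tr * tr - 4 * dt)"
  define l1 where "l1 = (tr + s) / 2"
  define l2 where "l2 = (tr - s) / 2"
  have s: "s * s = tr * tr - 4 * dt" using power2_csqrt by (simp add: s_def power2_eq_square)
  have "l1 * l2 = (tr * tr - s * s) / 4" by (simp add: l1_def l2_def field_simps)
  also have "\<dots> = dt" by (simp add: s)
  finally have "l1 * l2 = dt" .
  moreover have "l1 + l2 = tr" by (simp add: l1_def l2_def field_simps)
  ultimately have roots: "char_roots_2 P l1 l2" by (simp add: char_roots_2_def tr_def dt_def)
  obtain r1 r2 where r1: "r1 ^ k = l1" and r2: "r2 ^ k = l2"
    using nth_root_exists[OF k] by metis
  show ?thesis
  proof (cases "l1 = l2")
    case False
    show ?thesis by (rule root_in_bicommutant_2_distinct[OF P roots False r1 r2])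
  next
    case True
    have "l2 \<noteq> 0"
    proof
      assume "l2 = 0"
      then have "P * P = 0\<^sub>m 2 2"
        using pencil_mult_2[OF P roots, of 0 1 0 1] True by (simp add: pencil_0_1[OF P] pencil_0_0[OF P])
      then show False using invertible_mat_mult_self_nonzero[OF assms(2) P] by simp
    qed
    show ?thesis by (rule root_in_bicommutant_2_repeated[OF P roots[unfolded True] \<open>l2 \<noteq> 0\<close> r2 k])
  qed
qed

lemma root_in_bicommutant:
  fixes P :: "complex mat"
  assumes P: "P \<in> carrier_mat n n" and k: "k > 0"
    and "diagonalizable_mat P \<or> (n = 2 \<and> invertible_mat P)"
  shows "\<exists>Q \<in> carrier_mat n n. Q ^\<^sub>m k = P \<and> in_bicommutant n P Q"
  using assms(3) diagonalizable_mat_root_in_bicommutant[OF P _ k]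
    invertible_mat_2_root_in_bicommutant[of P k] P k by blast

theorem proposition2p9:
  fixes m n :: nat and P :: "nat \<Rightarrow> complex mat" and k :: "nat \<Rightarrow> nat"
  assumes "m \<ge> 1" and "n \<ge> 1"
    and P_dim: "\<forall>\<alpha>\<in>{1..m}. P \<alpha> \<in> carrier_mat n n"
    and P_comm: "\<forall>\<alpha>\<in>{1..m}. \<forall>\<beta>\<in>{1..m}. P \<alpha> * P \<beta> = P \<beta> * P \<alpha>"
    and cond: "(\<forall>\<alpha>\<in>{1..m}. diagonalizable_mat (P \<alpha>))
             \<or> (n = 2 \<and> (\<forall>\<alpha>\<in>{1..m}. invertible_mat (P \<alpha>)))"
    and k_pos: "\<forall>\<alpha>\<in>{1..m}. k \<alpha> \<ge> 1"
  shows "\<exists>Q :: nat \<Rightarrow> complex mat.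
           (\<forall>\<alpha>\<in>{1..m}. Q \<alpha> \<in> carrier_mat n n)
         \<and> (\<forall>\<alpha>\<in>{1..m}. Q \<alpha> ^\<^sub>m k \<alpha> = P \<alpha>)
         \<and> (\<forall>\<alpha>\<in>{1..m}. \<forall>\<beta>\<in>{1..m}. Q \<alpha> * Q \<beta> = Q \<beta> * Q \<alpha>)"
proof -
  have "\<exists>Q \<in> carrier_mat n n. Q ^\<^sub>m k \<alpha> = P \<alpha> \<and> in_bicommutant n (P \<alpha>) Q"
    if \<alpha>: "\<alpha> \<in> {1..m}" for \<alpha>
  proof (rule root_in_bicommutant)
    show "P \<alpha> \<in> carrier_mat n n" using P_dim \<alpha> by blast
    have "k \<alpha> \<ge> 1" using k_pos \<alpha> by blast
    then show "k \<alpha> > 0" by simp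
    show "diagonalizable_mat (P \<alpha>) \<or> (n = 2 \<and> invertible_mat (P \<alpha>))" using cond \<alpha> by blast
  qed
  then obtain Q where Q: "\<And>\<alpha>. \<alpha> \<in> {1..m} \<Longrightarrow>
      Q \<alpha> \<in> carrier_mat n n \<and> Q \<alpha> ^\<^sub>m k \<alpha> = P \<alpha> \<and> in_bicommutant n (P \<alpha>) (Q \<alpha>)"
    by metis
  have "Q \<alpha> * Q \<beta> = Q \<beta> * Q \<alpha>" if "\<alpha> \<in> {1..m}" and "\<beta> \<in> {1..m}" for \<alpha> \<beta>
    using in_bicommutant_commute[of "P \<beta>" n "P \<alpha>" "Q \<alpha>" "Q \<beta>"] Q that P_dim P_comm by blast
  with Q show ?thesis by blast
qed

end
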